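(* For $a\in\{0,1\}$ let $f^a(\rho)=\Pr\{R=\rho\mid A=a,Y=1\}$ for $\rho\in\mathcal{R}$. Suppose that for all $\rho,\rho'\in\mathcal{R}$ with $\rho>\rho'$ we have $f^0(\rho)-f^1(\rho)>f^0(\rho')-f^1(\rho')$ and $f_R(\rho)<f_R(\rho')$, and that $f^0(\rho)-f^1(\rho)\ge0$ for $\rho\in\{\rho_2,\dots,\rho_{n'}\}$. Then: 1. $\gamma(\epsilon)>0$ for all $\epsilon>0$ (i.e. $\mathscr{A}_\epsilon$ is always biased in favor of individuals with $A=0$); 2. $\gamma(\epsilon)<\gamma_\infty$ for all $\epsilon\ge0$, where $\gamma_\infty=\lim_{\epsilon\to+\infty}\gamma(\epsilon)$.
   Context: There are $n$ individuals indexed by $\mathcal{N}=\{1,\dots,n\}$. Individual $i$ is described by a random tuple $(X_i,A_i,Y_i)$, with features $X_i\in\mathcal{X}$, protected attribute $A_i\in\{0,1\}$ and qualification state $Y_i\in\{0,1\}$; the tuples are i.i.d. with a common distribution $\mathsf{F}$, and $(X,A,Y)$ denotes a generic tuple with distribution $\mathsf{F}$. A fixed function $r:\mathcal{X}\to\mathcal{R}$ is given, with $\mathcal{R}=\{\rho_1,\dots,\rho_{n'}\}\subset[0,1]$ finite, $\rho_1=0$, $\rho_{n'}=1$; $R_i=r(X_i)$, $R=r(X)$, and $f_R$ is the probability mass function of $R$. Conditioning events $\{A=a,Y=1\}$ are assumed to have positive probability. For $\epsilon\ge0$, define $Z_{i,\epsilon}=\exp(\epsilon R_i/2)/\sum_{j=1}^n\exp(\epsilon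 R_j/2)$, which is the probability that the exponential mechanism $\mathscr{A}_\epsilon$ selects $i$ given the scores, and $\gamma(\epsilon)=E\{Z_{i,\epsilon}\mid A_i=0,Y_i=1\}-E\{Z_{i,\epsilon}\mid A_i=1,Y_i=1\}$ (independent of $i$). The limit $\gamma_\infty=\lim_{\epsilon\to+\infty}\gamma(\epsilon)$ exists. *)

theory Defs
  imports "HOL-Probability.Probability"
begin

text \<open>A generic individual is a tuple (X, A, Y) :: 'x \<times> nat \<times> nat, distributed according to
  the probability measure F.\<close>

definition pop :: "('x \<times> nat \<times> nat) measure \<Rightarrow> nat \<Rightarrow> (nat \<Rightarrow> 'x \<times> nat \<times> nat) measure" where
  "pop F n = PiM {1..n} (\<lambda>_. F)"

definition cond_prob :: "'a measure \<Rightarrow> ('a \<Rightarrow> bool) \<Rightarrow> ('a \<Rightarrow> bool) \<Rightarrow> real" where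
  "cond_prob M P B = measure M {x \<in> space M. P x \<and> B x} / measure M {x \<in> space M. B x}"

definition cond_expect :: "'a measure \<Rightarrow> ('a \<Rightarrow> real) \<Rightarrow> ('a \<Rightarrow> bool) \<Rightarrow> real" where
  "cond_expect M f B = (\<integral>x. f x * indicator {x \<in> space M. B x} x \<partial>M) / measure M {x \<in> space M. B x}"

definition Zsel :: "nat \<Rightarrow> ('x \<Rightarrow> real) \<Rightarrow> nat \<Rightarrow> real \<Rightarrow> (nat \<Rightarrow> 'x \<times> nat \<times> nat) \<Rightarrow> real" where
  "Zsel n r i \<epsilon> \<omega> = exp (\<epsilon> * r (fst (\<omega> i)) / 2) / (\<Sum>j\<in>{1..n}. exp (\<epsilon> * r (fst (\<omega> j)) / 2))"

definition gamma :: "('x \<times> nat \<times> nat) measure \<Rightarrow> ('x \<Rightarrow> real) \<Rightarrow> nat \<Rightarrow> nat \<Rightarrow> real \<Rightarrow> real" where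
  "gamma F r n i \<epsilon> =
     cond_expect (pop F n) (Zsel n r i \<epsilon>) (\<lambda>\<omega>. fst (snd (\<omega> i)) = 0 \<and> snd (snd (\<omega> i)) = 1)
   - cond_expect (pop F n) (Zsel n r i \<epsilon>) (\<lambda>\<omega>. fst (snd (\<omega> i)) = 1 \<and> snd (snd (\<omega> i)) = 1)"

definition fA :: "('x \<times> nat \<times> nat) measure \<Rightarrow> ('x \<Rightarrow> real) \<Rightarrow> nat \<Rightarrow> real \<Rightarrow> real" where
  "fA F r a \<rho> = cond_prob F (\<lambda>w. r (fst w) = \<rho>) (\<lambda>w. fst (snd w) = a \<and> snd (snd w) = 1)"

definition fR :: "('x \<times> nat \<times> nat) measure \<Rightarrow> ('x \<Rightarrow> real) \<Rightarrow> real \<Rightarrow> real" where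
  "fR F r \<rho> = measure F {w \<in> space F. r (fst w) = \<rho>}"

end

theory Submission
  imports Defs
begin

(*
  Write d(rho) = f^0(rho) - f^1(rho) and let G(eps, rho) be the probability that the
  mechanism selects individual i when R_i = rho, the other n - 1 tuples being i.i.d.
  Conditioning on the tuple of i gives gamma(eps) = sum_rho d(rho) G(eps, rho).  The hypotheses
  make d strictly increasing with sum zero, so d(0) < 0 < d(1).  Since the d(rho) sum to zero,
  gamma(eps) = sum_rho d(rho) (G(eps, rho) - G(eps, 0)); for eps > 0 the function G(eps, -) is
  strictly increasing and d >= 0 away from 0, so gamma(eps) > 0.

  For the second claim write d = f_R * phi.  Because d is increasing and negative only at 0
  while f_R is positive and decreasing, phi is nondecreasing, and gamma(eps) = E[phi(R_i) Z_i].
  By exchangeability this is E[sum_k phi(R_k) Z_k] / n, and sum_k phi(R_k) Z_k is an average of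
  the phi(R_k) with positive weights: it is at most phi(max_k R_k), strictly so on the event
  (of positive probability) that one score is 1 and all others are 0.  As eps tends to infinity
  the weights concentrate on the maximal scores, so gamma tends to E[phi(max_k R_k)] / n.
*)

definition exp_mech :: "real \<Rightarrow> 'i set \<Rightarrow> ('i \<Rightarrow> real) \<Rightarrow> 'i \<Rightarrow> real" where
  "exp_mech \<epsilon> I x k = exp (\<epsilon> * x k / 2) / (\<Sum>j\<in>I. exp (\<epsilon> * x j / 2))"

lemma Zsel_eq_exp_mech: "Zsel n r i \<epsilon> \<omega> = exp_mech \<epsilon> {1..n} (\<lambda>j. r (fst (\<omega> j))) i"
  by (simp add: Zsel_def exp_mech_def)

lemma exp_mech_denom_pos:
  fixes x :: "'i \<Rightarrow> real"
  shows "finite I \<Longrightarrow> I \<noteq> {} \<Longrightarrow> 0 < (\<Sum>j\<in>I. exp (\<epsilon> * x j / 2))"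
  by (rule sum_pos) auto

lemma exp_mech_pos: "finite I \<Longrightarrow> k \<in> I \<Longrightarrow> 0 < exp_mech \<epsilon> I x k"
  unfolding exp_mech_def by (intro divide_pos_pos exp_mech_denom_pos) auto

lemma sum_exp_mech: "finite I \<Longrightarrow> I \<noteq> {} \<Longrightarrow> (\<Sum>k\<in>I. exp_mech \<epsilon> I x k) = 1"
  unfolding exp_mech_def using exp_mech_denom_pos[of I \<epsilon> x]
  by (simp add: sum_divide_distrib[symmetric])

lemma exp_mech_cong:
  "(\<And>j. j \<in> I \<Longrightarrow> x j = y j) \<Longrightarrow> x k = y k \<Longrightarrow> exp_mech \<epsilon> I x k = exp_mech \<epsilon> I y k"
  unfolding exp_mech_def by (auto intro!: sum.cong)

lemma exp_mech_permute:
  assumes "\<pi> permutes I"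
  shows "exp_mech \<epsilon> I (x \<circ> \<pi>) k = exp_mech \<epsilon> I x (\<pi> k)"
  using sum.permute[OF assms, of "\<lambda>j. exp (\<epsilon> * x j / 2)"]
  unfolding exp_mech_def by (simp add: comp_def)

lemma exp_mech_strict_mono_own_score:
  assumes I: "finite I" "i \<in> I" "j \<in> I" "j \<noteq> i" and "0 < \<epsilon>" "s < t"
  shows "exp_mech \<epsilon> I (x(i := s)) i < exp_mech \<epsilon> I (x(i := t)) i"
proof -
  define S where "S = (\<Sum>j\<in>I - {i}. exp (\<epsilon> * x j / 2))"
  have S: "0 < S"
    unfolding S_def using I by (intro sum_pos) auto
  have split: "exp_mech \<epsilon> I (x(i := u)) i = exp (\<epsilon> * u / 2) / (exp (\<epsilon> * u / 2) + S)" for u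
  proof -
    have "(\<Sum>j\<in>I - {i}. exp (\<epsilon> * (x(i := u)) j / 2)) = S"
      unfolding S_def by (intro sum.cong) auto
    then show ?thesis
      unfolding exp_mech_def using I by (simp add: sum.remove)
  qed
  have "exp (\<epsilon> * s / 2) < exp (\<epsilon> * t / 2)"
    using assms by simp
  then have "exp (\<epsilon> * s / 2) * S < exp (\<epsilon> * t / 2) * S"
    using S by simp
  then show ?thesis
    unfolding split using S by (simp add: field_simps add_pos_pos)
qed

lemma exp_mech_le_exp_diff:
  assumes "finite I" "j \<in> I"
  shows "exp_mech \<epsilon> I x k \<le> exp (\<epsilon> * (x k - x j) / 2)"
proof -
  have "exp (\<epsilon> * x j / 2) \<le> (\<Sum>j\<in>I. exp (\<epsilon> * x j / 2))"
    using assms by (intro member_le_sum) auto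
  then have "exp_mech \<epsilon> I x k \<le> exp (\<epsilon> * x k / 2) / exp (\<epsilon> * x j / 2)"
    unfolding exp_mech_def using assms by (intro divide_left_mono) (auto intro!: mult_pos_pos exp_mech_denom_pos)
  also have "\<dots> = exp (\<epsilon> * (x k - x j) / 2)"
    by (simp add: exp_diff[symmetric] right_diff_distrib diff_divide_distrib)
  finally show ?thesis .
qed

lemma exp_mech_tendsto_0:
  assumes "finite I" "j \<in> I" "x k < x j"
  shows "((\<lambda>\<epsilon>. exp_mech \<epsilon> I x k) \<longlongrightarrow> 0) at_top"
proof -
  have "filterlim (\<lambda>\<epsilon>. (x k - x j) / 2 * \<epsilon>) at_bot at_top"
    using assms(3) by (intro filterlim_tendsto_neg_mult_at_bot[OF tendsto_const]) (simp_all add: filterlim_ident)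
  then have lim: "((\<lambda>\<epsilon>. exp ((x k - x j) / 2 * \<epsilon>)) \<longlongrightarrow> 0) at_top"
    by (rule filterlim_compose[OF exp_at_bot])
  have upper: "exp_mech \<epsilon> I x k \<le> exp ((x k - x j) / 2 * \<epsilon>)" for \<epsilon>
    using exp_mech_le_exp_diff[OF assms(1,2)] by (simp add: mult.commute)
  have lower: "0 \<le> exp_mech \<epsilon> I x k" for \<epsilon>
    by (auto intro!: divide_nonneg_nonneg sum_nonneg simp: exp_mech_def)
  show ?thesis
    by (rule tendsto_sandwich[OF always_eventually always_eventually tendsto_const lim])
      (use upper lower in auto)
qed

lemma sum_exp_mech_weighted_le:
  assumes "finite I" "I \<noteq> {}" "\<And>k. k \<in> I \<Longrightarrow> g k \<le> m"
  shows "(\<Sum>k\<in>I. g k * exp_mech \<epsilon> I x k) \<le> m"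
proof -
  have "(\<Sum>k\<in>I. g k * exp_mech \<epsilon> I x k) \<le> (\<Sum>k\<in>I. m * exp_mech \<epsilon> I x k)"
    using assms by (intro sum_mono mult_right_mono less_imp_le[OF exp_mech_pos]) auto
  also have "\<dots> = m"
    using assms by (simp add: sum_distrib_left[symmetric] sum_exp_mech)
  finally show ?thesis .
qed

lemma sum_exp_mech_weighted_less:
  assumes "finite I" "\<And>k. k \<in> I \<Longrightarrow> g k \<le> m" "k0 \<in> I" "g k0 < m"
  shows "(\<Sum>k\<in>I. g k * exp_mech \<epsilon> I x k) < m"
proof -
  have "I \<noteq> {}"
    using assms(3) by auto
  have "(\<Sum>k\<in>I. g k * exp_mech \<epsilon> I x k) < (\<Sum>k\<in>I. m * exp_mech \<epsilon> I x k)"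
    using assms by (intro sum_strict_mono_ex1 ballI bexI[of _ k0] mult_right_mono
        mult_strict_right_mono less_imp_le[OF exp_mech_pos] exp_mech_pos) auto
  also have "\<dots> = m"
    using assms \<open>I \<noteq> {}\<close> by (simp add: sum_distrib_left[symmetric] sum_exp_mech)
  finally show ?thesis .
qed

lemma sum_exp_mech_weighted_tendsto:
  assumes I: "finite I" "I \<noteq> {}"
  shows "((\<lambda>\<epsilon>. \<Sum>k\<in>I. g (x k) * exp_mech \<epsilon> I x k) \<longlongrightarrow> g (Max (x ` I))) at_top"
proof -
  define M where "M = Max (x ` I)"
  have "M \<in> x ` I"
    unfolding M_def using I by (intro Max_in) auto
  then obtain j where j: "j \<in> I" "x j = M"
    by auto
  have "((\<lambda>\<epsilon>. (g M - g (x k)) * exp_mech \<epsilon> I x k) \<longlongrightarrow> 0) at_top" if "k \<in> I" for k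
  proof (cases "x k = M")
    case False
    then have "x k < x j"
      using that I j unfolding M_def by (simp add: order.not_eq_order_implies_strict)
    then show ?thesis
      using exp_mech_tendsto_0[OF I(1) j(1)] tendsto_mult_right_zero by blast
  qed simp
  then have "((\<lambda>\<epsilon>. g M - (\<Sum>k\<in>I. (g M - g (x k)) * exp_mech \<epsilon> I x k)) \<longlongrightarrow> g M - 0) at_top"
    by (intro tendsto_diff tendsto_const tendsto_null_sum)
  moreover have "g M - (\<Sum>k\<in>I. (g M - g (x k)) * exp_mech \<epsilon> I x k)
      = (\<Sum>k\<in>I. g (x k) * exp_mech \<epsilon> I x k)" for \<epsilon>
    using I by (simp add: left_diff_distrib sum_subtractf sum_distrib_left[symmetric] sum_exp_mech)
  ultimately show ?thesis
    unfolding M_def by simp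
qed

lemma sum_PiE_insert:
  assumes "i \<notin> J"
  shows "(\<Sum>c\<in>PiE (insert i J) B. h c) = (\<Sum>v\<in>B i. \<Sum>c\<in>PiE J B. h (c(i := v)))"
  unfolding PiE_insert_eq sum.cartesian_product
  by (subst sum.reindex[OF inj_combinator[OF assms]]) (simp add: case_prod_beta)

lemma sum_PiE_permute:
  assumes "\<pi> permutes I"
  shows "(\<Sum>c\<in>PiE I (\<lambda>_. V). h (c \<circ> \<pi>)) = (\<Sum>c\<in>PiE I (\<lambda>_. V). h c)"
proof -
  have closed: "c \<circ> \<sigma> \<in> PiE I (\<lambda>_. V)" if "c \<in> PiE I (\<lambda>_. V)" "\<sigma> permutes I" for c \<sigma>
    using that by (auto simp: PiE_iff extensional_def permutes_in_image permutes_not_in)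
  show ?thesis
    by (rule sum.reindex_bij_witness[where i="\<lambda>c. c \<circ> inv \<pi>" and j="\<lambda>c. c \<circ> \<pi>"])
      (auto simp: comp_assoc permutes_inv_o[OF assms] assms closed permutes_inv)
qed

lemma strict_mono_on_sum_eq_0_signs:
  fixes d :: "'a::linorder \<Rightarrow> real"
  assumes S: "finite S" "a \<in> S" "b \<in> S" "a < b"
      "\<And>x. x \<in> S \<Longrightarrow> a \<le> x" "\<And>x. x \<in> S \<Longrightarrow> x \<le> b"
    and d: "strict_mono_on S d" "(\<Sum>x\<in>S. d x) = 0"
  shows "d a < 0" "0 < d b"
proof -
  have ab: "d a < d b"
    using S by (intro strict_mono_onD[OF d(1)])
  have le: "d a \<le> d x" "d x \<le> d b" if "x \<in> S" for x
    using S that by (auto intro: strict_mono_on_leD[OF d(1)])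
  show "0 < d b"
  proof (rule ccontr)
    assume "\<not> 0 < d b"
    then have "(\<Sum>x\<in>S. d x) < (\<Sum>x\<in>S. 0)"
      using S(1,2) le(2) ab by (intro sum_strict_mono_ex1 bexI[of _ a]) fastforce+
    then show False
      using d(2) by simp
  qed
  show "d a < 0"
  proof (rule ccontr)
    assume "\<not> d a < 0"
    then have "(\<Sum>x\<in>S. 0) < (\<Sum>x\<in>S. d x)"
      using S(1,3) le(1) ab by (intro sum_strict_mono_ex1 bexI[of _ b]) fastforce+
    then show False
      using d(2) by simp
  qed
qed

lemma mono_on_divide_antimono:
  fixes d f :: "'a::linorder \<Rightarrow> real"
  assumes "mono_on S d" "antimono_on S f" "\<And>x. x \<in> S \<Longrightarrow> 0 < f x"
    and "\<And>x. x \<in> S \<Longrightarrow> a \<le> x" "\<And>x. x \<in> S - {a} \<Longrightarrow> 0 \<le> d x"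
  shows "mono_on S (\<lambda>x. d x / f x)"
proof (rule mono_onI)
  fix x y assume xy: "x \<in> S" "y \<in> S" "x \<le> y"
  have f: "0 < f x" "0 < f y"
    using assms xy by auto
  show "d x / f x \<le> d y / f y"
  proof (cases "0 \<le> d x")
    case True
    have "d x \<le> d y" "f y \<le> f x"
      using assms xy by (auto dest: mono_onD monotone_onD)
    then have "d x / f x \<le> d y / f x" "d y / f x \<le> d y / f y"
      using True f by (auto intro!: divide_right_mono divide_left_mono)
    then show ?thesis
      by linarith
  next
    case False
    show ?thesis
    proof (cases "x = y")
      case False
      then have "y \<noteq> a"
        using assms(4)[OF xy(1)] xy(3) by auto
      then have "0 \<le> d y / f y"
        using assms(5) xy(2) f by simp
      moreover have "d x / f x < 0"
        using \<open>\<not> 0 \<le> d x\<close> f by (simp add: divide_neg_pos)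
      ultimately show ?thesis
        by linarith
    qed simp
  qed
qed

lemma sum_mult_pos_of_sum_eq_0:
  fixes d g :: "'a \<Rightarrow> real"
  assumes "finite S" "a \<in> S" "(\<Sum>x\<in>S. d x) = 0"
    and "\<And>x. x \<in> S - {a} \<Longrightarrow> 0 \<le> d x \<and> g a < g x" "b \<in> S - {a}" "0 < d b"
  shows "0 < (\<Sum>x\<in>S. d x * g x)"
proof -
  have "(\<Sum>x\<in>S. d x * g x) = (\<Sum>x\<in>S. d x * (g x - g a)) + (\<Sum>x\<in>S. d x) * g a"
    by (simp add: right_diff_distrib sum_subtractf sum_distrib_right)
  also have "\<dots> = (\<Sum>x\<in>S. d x * (g x - g a))"
    using assms(3) by simp
  also have "\<dots> > 0"
  proof (rule sum_pos2[of S b])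
    fix x assume "x \<in> S"
    then show "0 \<le> d x * (g x - g a)"
      using assms(4)[of x] by (cases "x = a") auto
  qed (use assms in auto)
  finally show ?thesis .
qed

lemma sum_pos_imp_ex_pos:
  fixes f :: "'a \<Rightarrow> 'b::linordered_ab_group_add"
  assumes "0 < sum f A"
  obtains a where "a \<in> A" "0 < f a"
proof -
  have "\<not> (\<forall>a\<in>A. f a \<le> 0)"
    using assms sum_nonpos[of A f] by force
  then show ?thesis
    using that by (auto simp: not_le)
qed

lemma (in prob_space) integral_PiM_finite_valued:
  fixes T :: "'a \<Rightarrow> 'v" and \<Phi> :: "('i \<Rightarrow> 'v) \<Rightarrow> real"
  assumes I: "finite I" and T: "T \<in> M \<rightarrow>\<^sub>M count_space UNIV"
    and TV: "\<And>w. w \<in> space M \<Longrightarrow> T w \<in> V" and V: "finite V"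
  shows "(\<integral>\<omega>. \<Phi> (\<lambda>j\<in>I. T (\<omega> j)) \<partial>PiM I (\<lambda>_. M))
       = (\<Sum>c\<in>PiE I (\<lambda>_. V). \<Phi> c * (\<Prod>j\<in>I. prob {w\<in>space M. T w = c j}))"
proof -
  interpret P: finite_product_prob_space "\<lambda>_. M" I
    by unfold_locales (rule I)
  have level_set: "{w\<in>space M. T w = v} \<in> events" for v
    using measurable_sets[OF T, of "{v}"] by (simp add: vimage_def Int_def conj_commute)
  define cyl where "cyl c = PiE I (\<lambda>j. {w\<in>space M. T w = c j})" for c :: "'i \<Rightarrow> 'v"
  have cyl_sets: "cyl c \<in> sets (PiM I (\<lambda>_. M))" for c
    unfolding cyl_def using level_set by (intro sets_PiM_I_finite I) auto
  have expand: "\<Phi> (\<lambda>j\<in>I. T (\<omega> j)) = (\<Sum>c\<in>PiE I (\<lambda>_. V). \<Phi> c * indicator (cyl c) \<omega>)"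
    if \<omega>: "\<omega> \<in> space (PiM I (\<lambda>_. M))" for \<omega>
  proof -
    have "indicator (cyl c) \<omega> = (if c = (\<lambda>j\<in>I. T (\<omega> j)) then 1 else 0 :: real)"
      if "c \<in> PiE I (\<lambda>_. V)" for c
      using \<omega> that unfolding cyl_def
      by (auto simp: indicator_def space_PiM PiE_iff extensional_def fun_eq_iff) metis
    then have "(\<Sum>c\<in>PiE I (\<lambda>_. V). \<Phi> c * indicator (cyl c) \<omega>)
        = (\<Sum>c\<in>PiE I (\<lambda>_. V). if c = (\<lambda>j\<in>I. T (\<omega> j)) then \<Phi> c else 0)"
      by (intro sum.cong) auto
    moreover have "(\<lambda>j\<in>I. T (\<omega> j)) \<in> PiE I (\<lambda>_. V)"
      using \<omega> TV by (auto simp: space_PiM PiE_iff)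
    ultimately show ?thesis
      using I V by (simp add: sum.delta' finite_PiE)
  qed
  have "(\<integral>\<omega>. \<Phi> (\<lambda>j\<in>I. T (\<omega> j)) \<partial>PiM I (\<lambda>_. M))
      = (\<integral>\<omega>. (\<Sum>c\<in>PiE I (\<lambda>_. V). \<Phi> c * indicator (cyl c) \<omega>) \<partial>PiM I (\<lambda>_. M))"
    by (rule Bochner_Integration.integral_cong[OF refl expand])
  also have "\<dots> = (\<Sum>c\<in>PiE I (\<lambda>_. V). \<Phi> c * measure (PiM I (\<lambda>_. M)) (cyl c))"
    by (subst Bochner_Integration.integral_sum)
      (auto intro!: sum.cong integrable_real_mult_indicator cyl_sets
        simp: P.emeasure_eq_measure sets.Int_space_eq2[OF cyl_sets])
  also have "\<dots> = (\<Sum>c\<in>PiE I (\<lambda>_. V). \<Phi> c * (\<Prod>j\<in>I. prob {w\<in>space M. T w = c j}))"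
    unfolding cyl_def using level_set by (intro sum.cong refl arg_cong2[where f="(*)"] P.prob_times) auto
  finally show ?thesis .
qed

lemma fA_nonneg: "0 \<le> fA F r a \<rho>"
  by (simp add: fA_def cond_prob_def)

locale scored_population = prob_space F
  for F :: "('x \<times> nat \<times> nat) measure" +
  fixes r :: "'x \<Rightarrow> real" and Rs :: "real set" and n :: nat
  assumes obs_measurable:
      "(\<lambda>w. (r (fst w), fst (snd w), snd (snd w))) \<in> F \<rightarrow>\<^sub>M count_space UNIV"
    and attrs_binary: "\<forall>w\<in>space F. fst (snd w) \<in> {0, 1} \<and> snd (snd w) \<in> {0, 1}"
    and finite_scores: "finite Rs"
    and score_range: "\<forall>w\<in>space F. r (fst w) \<in> Rs"
begin

definition obs :: "'x \<times> nat \<times> nat \<Rightarrow> real \<times> nat \<times> nat" where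
  "obs w = (r (fst w), fst (snd w), snd (snd w))"

definition obs_range :: "(real \<times> nat \<times> nat) set" where
  "obs_range = Rs \<times> {0, 1} \<times> {0, 1}"

definition law :: "real \<times> nat \<times> nat \<Rightarrow> real" where
  "law v = prob {w \<in> space F. obs w = v}"

definition weight :: "nat set \<Rightarrow> (nat \<Rightarrow> real \<times> nat \<times> nat) \<Rightarrow> real" where
  "weight J c = (\<Prod>j\<in>J. law (c j))"

definition sel_given_score :: "nat \<Rightarrow> real \<Rightarrow> real \<Rightarrow> real" where
  "sel_given_score i \<epsilon> \<rho> =
     (\<Sum>c\<in>PiE ({1..n} - {i}) (\<lambda>_. obs_range).
        weight ({1..n} - {i}) c * exp_mech \<epsilon> {1..n} ((\<lambda>j. fst (c j))(i := \<rho>)) i)"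

definition fA_gap :: "real \<Rightarrow> real" where
  "fA_gap \<rho> = fA F r 0 \<rho> - fA F r 1 \<rho>"

abbreviation group_prob :: "nat \<Rightarrow> real" where
  "group_prob a \<equiv> prob {w \<in> space F. fst (snd w) = a \<and> snd (snd w) = 1}"

lemma measurable_obs: "obs \<in> F \<rightarrow>\<^sub>M count_space UNIV"
  using obs_measurable unfolding obs_def[abs_def] .

lemma obs_in_range:
  assumes "w \<in> space F"
  shows "obs w \<in> obs_range"
proof -
  obtain x a y where w: "w = (x, a, y)"
    by (metis prod_cases3)
  show ?thesis
    using assms attrs_binary score_range unfolding w by (auto simp: obs_def obs_range_def)
qed

lemma finite_obs_range: "finite obs_range"
  using finite_scores by (simp add: obs_range_def)

lemma law_nonneg: "0 \<le> law v"
  by (simp add: law_def)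

lemma weight_nonneg: "0 \<le> weight J c"
  by (simp add: weight_def prod_nonneg law_nonneg)

lemma prob_obs_in: "finite S \<Longrightarrow> prob {w \<in> space F. obs w \<in> S} = (\<Sum>v\<in>S. law v)"
proof -
  assume "finite S"
  have level_set: "{w \<in> space F. obs w = v} \<in> events" for v
    using measurable_sets[OF measurable_obs, of "{v}"] by (simp add: vimage_def Int_def conj_commute)
  have "{w \<in> space F. obs w \<in> S} = (\<Union>v\<in>S. {w \<in> space F. obs w = v})"
    by auto
  also have "prob \<dots> = (\<Sum>v\<in>S. law v)"
    unfolding law_def using \<open>finite S\<close> level_set
    by (intro finite_measure_finite_Union) (auto simp: disjoint_family_on_def)
  finally show ?thesis .
qed

lemma sum_law: "(\<Sum>v\<in>obs_range. law v) = 1"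
proof -
  have "{w \<in> space F. obs w \<in> obs_range} = space F"
    using obs_in_range by auto
  then show ?thesis
    using prob_obs_in[OF finite_obs_range] prob_space by simp
qed

lemma sum_weight: "finite J \<Longrightarrow> (\<Sum>c\<in>PiE J (\<lambda>_. obs_range). weight J c) = 1"
  using prod_sum_PiE[of J "\<lambda>_. obs_range" "\<lambda>_. law"] finite_obs_range
  by (simp add: weight_def sum_law)

lemma weight_permute: "\<pi> permutes J \<Longrightarrow> weight J (\<lambda>j. c (\<pi> j)) = weight J c"
  using prod.permute[of \<pi> J "\<lambda>j. law (c j)"] by (simp add: weight_def comp_def)

lemma fR_eq_sum_law: "fR F r \<rho> = (\<Sum>u\<in>{0, 1} \<times> {0, 1}. law (\<rho>, u))"
proof -
  have "{w \<in> space F. r (fst w) = \<rho>} = {w \<in> space F. obs w \<in> {\<rho>} \<times> ({0, 1} \<times> {0, 1})}"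
    using attrs_binary by (auto simp: obs_def)
  then have "fR F r \<rho> = prob {w \<in> space F. obs w \<in> {\<rho>} \<times> ({0, 1} \<times> {0, 1})}"
    unfolding fR_def by (simp only:)
  also have "\<dots> = (\<Sum>v\<in>{\<rho>} \<times> ({0, 1} \<times> {0, 1}). law v)"
    by (rule prob_obs_in) simp
  finally show ?thesis
    by (simp add: sum.cartesian_product')
qed

lemma group_prob_eq_sum_law: "group_prob a = (\<Sum>\<rho>\<in>Rs. law (\<rho>, a, 1))"
proof -
  have "{w \<in> space F. fst (snd w) = a \<and> snd (snd w) = 1} = {w \<in> space F. obs w \<in> Rs \<times> {(a, 1)}}"
    using score_range by (auto simp: obs_def)
  then have "group_prob a = prob {w \<in> space F. obs w \<in> Rs \<times> {(a, 1)}}"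
    by (simp only:)
  also have "\<dots> = (\<Sum>v\<in>Rs \<times> {(a, 1)}. law v)"
    using finite_scores by (intro prob_obs_in) simp
  finally show ?thesis
    by (simp add: sum.cartesian_product')
qed

lemma fA_eq_law: "fA F r a \<rho> = law (\<rho>, a, 1) / group_prob a"
proof -
  have "{w \<in> space F. obs w = (\<rho>, a, 1)}
      = {w \<in> space F. r (fst w) = \<rho> \<and> fst (snd w) = a \<and> snd (snd w) = 1}"
    by (auto simp: obs_def)
  then show ?thesis
    unfolding fA_def cond_prob_def law_def by simp
qed

lemma sum_fA: "0 < group_prob a \<Longrightarrow> (\<Sum>\<rho>\<in>Rs. fA F r a \<rho>) = 1"
  unfolding fA_eq_law sum_divide_distrib[symmetric] group_prob_eq_sum_law[symmetric] by simp

lemma sum_fA_gap: "0 < group_prob 0 \<Longrightarrow> 0 < group_prob 1 \<Longrightarrow> (\<Sum>\<rho>\<in>Rs. fA_gap \<rho>) = 0"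
  by (simp add: fA_gap_def sum_subtractf sum_fA)

lemma fR_pos_of_fA_pos:
  assumes "a \<in> {0, 1}" "0 < fA F r a \<rho>"
  shows "0 < fR F r \<rho>"
proof -
  have "0 < law (\<rho>, a, 1)"
    using assms(2) law_nonneg[of "(\<rho>, a, 1)"] by (auto simp: fA_eq_law zero_less_divide_iff)
  also have "law (\<rho>, a, 1) \<le> fR F r \<rho>"
    unfolding fR_eq_sum_law using assms(1)
    by (intro member_le_sum[of "(a, 1)" _ "\<lambda>u. law (\<rho>, u)"]) (auto simp: law_nonneg)
  finally show ?thesis .
qed

lemma integral_pop:
  "(\<integral>\<omega>. \<Phi> (\<lambda>j\<in>{1..n}. obs (\<omega> j)) \<partial>pop F n)
     = (\<Sum>c\<in>PiE {1..n} (\<lambda>_. obs_range). weight {1..n} c * \<Phi> c)"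
  unfolding pop_def weight_def law_def
  using integral_PiM_finite_valued[OF _ measurable_obs obs_in_range finite_obs_range, of "{1..n}" \<Phi>]
  by (simp add: mult.commute)

lemma sum_weight_insert:
  assumes "finite I" "i \<in> I"
  shows "(\<Sum>c\<in>PiE I (\<lambda>_. obs_range). weight I c * \<Psi> c)
       = (\<Sum>v\<in>obs_range. law v *
            (\<Sum>c\<in>PiE (I - {i}) (\<lambda>_. obs_range). weight (I - {i}) c * \<Psi> (c(i := v))))"
proof -
  have weight_upd: "weight I (c(i := v)) = law v * weight (I - {i}) c" for c v
    unfolding weight_def using assms by (auto simp: prod.remove intro!: prod.cong)
  have "(\<Sum>c\<in>PiE I (\<lambda>_. obs_range). weight I c * \<Psi> c)
      = (\<Sum>c\<in>PiE (insert i (I - {i})) (\<lambda>_. obs_range). weight I c * \<Psi> c)"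
    using assms by (simp add: insert_absorb)
  also have "\<dots> = (\<Sum>v\<in>obs_range. \<Sum>c\<in>PiE (I - {i}) (\<lambda>_. obs_range).
                      weight I (c(i := v)) * \<Psi> (c(i := v)))"
    by (rule sum_PiE_insert) simp
  finally show ?thesis
    by (simp add: weight_upd sum_distrib_left ac_simps)
qed

lemma sum_weight_exp_mech_condition:
  assumes "i \<in> {1..n}"
  shows "(\<Sum>c\<in>PiE {1..n} (\<lambda>_. obs_range).
            weight {1..n} c * (h (c i) * exp_mech \<epsilon> {1..n} (\<lambda>j. fst (c j)) i))
       = (\<Sum>v\<in>obs_range. law v * h v * sel_given_score i \<epsilon> (fst v))"
proof -
  have upd: "(\<lambda>j. fst ((c(i := v)) j)) = (\<lambda>j. fst (c j))(i := fst v)"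
    for c :: "nat \<Rightarrow> real \<times> nat \<times> nat" and v
    by (rule ext) simp
  show ?thesis
    unfolding sum_weight_insert[OF finite_atLeastAtMost assms] sel_given_score_def upd
    by (simp add: sum_distrib_left ac_simps)
qed

lemma cond_expect_Zsel:
  assumes "i \<in> {1..n}" "a \<in> {0, 1}"
  shows "cond_expect (pop F n) (Zsel n r i \<epsilon>) (\<lambda>\<omega>. fst (snd (\<omega> i)) = a \<and> snd (snd (\<omega> i)) = 1)
       = (\<Sum>\<rho>\<in>Rs. fA F r a \<rho> * sel_given_score i \<epsilon> \<rho>)"
proof -
  interpret P: finite_product_prob_space "\<lambda>_. F" "{1..n}"
    by unfold_locales simp
  define h where "h v = (if fst (snd v) = a \<and> snd (snd v) = 1 then 1 else 0 :: real)"
    for v :: "real \<times> nat \<times> nat"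
  define B where "B = {\<omega> \<in> space (pop F n). fst (snd (\<omega> i)) = a \<and> snd (snd (\<omega> i)) = 1}"
  define \<Phi> where "\<Phi> c = h (c i) * exp_mech \<epsilon> {1..n} (\<lambda>j. fst (c j)) i"
    for c :: "nat \<Rightarrow> real \<times> nat \<times> nat"
  have "Zsel n r i \<epsilon> \<omega> * indicator B \<omega> = \<Phi> (\<lambda>j\<in>{1..n}. obs (\<omega> j))"
    if "\<omega> \<in> space (pop F n)" for \<omega>
  proof -
    have "indicator B \<omega> = h (obs (\<omega> i))"
      using that by (simp add: B_def h_def obs_def indicator_def)
    moreover have "exp_mech \<epsilon> {1..n} (\<lambda>j. fst ((\<lambda>j\<in>{1..n}. obs (\<omega> j)) j)) i
        = exp_mech \<epsilon> {1..n} (\<lambda>j. r (fst (\<omega> j))) i"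
      using assms(1) by (intro exp_mech_cong) (auto simp: obs_def)
    ultimately show ?thesis
      unfolding \<Phi>_def using assms(1) by (simp add: Zsel_eq_exp_mech)
  qed
  then have "(\<integral>\<omega>. Zsel n r i \<epsilon> \<omega> * indicator B \<omega> \<partial>pop F n)
      = (\<integral>\<omega>. \<Phi> (\<lambda>j\<in>{1..n}. obs (\<omega> j)) \<partial>pop F n)"
    by (rule Bochner_Integration.integral_cong[OF refl])
  also have "\<dots> = (\<Sum>v\<in>obs_range. law v * h v * sel_given_score i \<epsilon> (fst v))"
    unfolding integral_pop[of \<Phi>] unfolding \<Phi>_def by (rule sum_weight_exp_mech_condition[OF assms(1)])
  also have "\<dots> = (\<Sum>\<rho>\<in>Rs. law (\<rho>, a, 1) * sel_given_score i \<epsilon> \<rho>)"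
    unfolding obs_range_def sum.cartesian_product'
    using assms(2) by (intro sum.cong refl) (auto simp: h_def)
  finally have num: "(\<integral>\<omega>. Zsel n r i \<epsilon> \<omega> * indicator B \<omega> \<partial>pop F n)
      = (\<Sum>\<rho>\<in>Rs. law (\<rho>, a, 1) * sel_given_score i \<epsilon> \<rho>)" .
  define G where "G = {w \<in> space F. fst (snd w) = a \<and> snd (snd w) = 1}"
  have "G = {w \<in> space F. obs w \<in> Rs \<times> {(a, 1)}}"
    using score_range by (auto simp: G_def obs_def)
  then have G: "G \<in> events"
    using measurable_sets[OF measurable_obs, of "Rs \<times> {(a, 1)}"] by (simp add: vimage_def Int_def conj_commute)
  have "B = {\<omega> \<in> space (PiM {1..n} (\<lambda>_. F)). \<omega> i \<in> G}"
    using assms(1) by (auto simp: B_def G_def pop_def space_PiM PiE_iff)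
  then have "measure (pop F n) B = measure F G"
    using P.emeasure_PiM_Collect_single[OF assms(1) G] by (simp add: pop_def measure_def)
  then have den: "measure (pop F n) B = group_prob a"
    by (simp only: G_def)
  show ?thesis
    unfolding cond_expect_def B_def[symmetric] num den fA_eq_law
    by (simp add: sum_divide_distrib)
qed

lemma gamma_eq_sum_sel_given_score:
  "i \<in> {1..n} \<Longrightarrow>
     gamma F r n i \<epsilon> = (\<Sum>\<rho>\<in>Rs. fA_gap \<rho> * sel_given_score i \<epsilon> \<rho>)"
  using cond_expect_Zsel[of i 0 \<epsilon>] cond_expect_Zsel[of i 1 \<epsilon>]
  unfolding gamma_def fA_gap_def by (simp add: left_diff_distrib sum_subtractf)

lemma sel_given_score_strict_mono:
  assumes "2 \<le> n" "i \<in> {1..n}" "0 < \<epsilon>" "\<rho> < \<rho>'"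
  shows "sel_given_score i \<epsilon> \<rho> < sel_given_score i \<epsilon> \<rho>'"
proof -
  define J where "J = {1..n} - {i}"
  have j: "(if i = 1 then 2 else 1) \<in> J"
    using assms(1,2) unfolding J_def by auto
  have "0 < (\<Sum>c\<in>PiE J (\<lambda>_. obs_range). weight J c)"
    using sum_weight[of J] by (simp add: J_def)
  then obtain c0 where c0: "c0 \<in> PiE J (\<lambda>_. obs_range)" "0 < weight J c0"
    by (rule sum_pos_imp_ex_pos)
  have "exp_mech \<epsilon> {1..n} ((\<lambda>j. fst (c j))(i := \<rho>)) i < exp_mech \<epsilon> {1..n} ((\<lambda>j. fst (c j))(i := \<rho>')) i"
    for c
    using j assms by (intro exp_mech_strict_mono_own_score[of _ _ "if i = 1 then 2 else 1"]) (auto simp: J_def)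
  then show ?thesis
    unfolding sel_given_score_def J_def[symmetric] using c0
    by (intro sum_strict_mono_ex1 ballI bexI[of _ c0] mult_left_mono mult_strict_left_mono
        less_imp_le weight_nonneg finite_PiE finite_obs_range) (auto simp: J_def)
qed

lemma sum_weight_exp_mech_exchangeable:
  assumes "i \<in> {1..n}" "k \<in> {1..n}"
  shows "(\<Sum>c\<in>PiE {1..n} (\<lambda>_. obs_range).
            weight {1..n} c * (\<phi> (fst (c k)) * exp_mech \<epsilon> {1..n} (\<lambda>j. fst (c j)) k))
       = (\<Sum>c\<in>PiE {1..n} (\<lambda>_. obs_range).
            weight {1..n} c * (\<phi> (fst (c i)) * exp_mech \<epsilon> {1..n} (\<lambda>j. fst (c j)) i))"
    (is "(\<Sum>c\<in>?C. ?f k c) = (\<Sum>c\<in>?C. ?f i c)")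
proof -
  define \<pi> where "\<pi> = Transposition.transpose i k"
  have \<pi>: "\<pi> permutes {1..n}"
    unfolding \<pi>_def using assms by (rule permutes_swap_id)
  have "?f k (c \<circ> \<pi>) = ?f i c" for c
  proof -
    have "\<pi> k = i"
      by (simp add: \<pi>_def)
    moreover have "(\<lambda>j. fst (c (\<pi> j))) = (\<lambda>j. fst (c j)) \<circ> \<pi>"
      by auto
    ultimately show ?thesis
      by (simp only: comp_apply weight_permute[OF \<pi>] exp_mech_permute[OF \<pi>])
  qed
  then show ?thesis
    using sum_PiE_permute[OF \<pi>, of "?f k" obs_range] by simp
qed

lemma sum_fR_sel_given_score_eq_average:
  assumes "i \<in> {1..n}"
  shows "(\<Sum>\<rho>\<in>Rs. fR F r \<rho> * \<phi> \<rho> * sel_given_score i \<epsilon> \<rho>)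
       = (\<Sum>c\<in>PiE {1..n} (\<lambda>_. obs_range). weight {1..n} c *
            (\<Sum>k\<in>{1..n}. \<phi> (fst (c k)) * exp_mech \<epsilon> {1..n} (\<lambda>j. fst (c j)) k)) / n"
proof -
  have "(\<Sum>\<rho>\<in>Rs. fR F r \<rho> * \<phi> \<rho> * sel_given_score i \<epsilon> \<rho>)
      = (\<Sum>v\<in>obs_range. law v * \<phi> (fst v) * sel_given_score i \<epsilon> (fst v))"
    unfolding obs_range_def sum.cartesian_product' fR_eq_sum_law
    by (simp only: sum_distrib_right fst_conv)
  also have "\<dots> = (\<Sum>c\<in>PiE {1..n} (\<lambda>_. obs_range).
            weight {1..n} c * (\<phi> (fst (c i)) * exp_mech \<epsilon> {1..n} (\<lambda>j. fst (c j)) i))"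
    using sum_weight_exp_mech_condition[OF assms, of "\<lambda>v. \<phi> (fst v)" \<epsilon>] by simp
  finally have each: "(\<Sum>\<rho>\<in>Rs. fR F r \<rho> * \<phi> \<rho> * sel_given_score i \<epsilon> \<rho>)
      = (\<Sum>c\<in>PiE {1..n} (\<lambda>_. obs_range).
            weight {1..n} c * (\<phi> (fst (c k)) * exp_mech \<epsilon> {1..n} (\<lambda>j. fst (c j)) k))"
    if "k \<in> {1..n}" for k
    using sum_weight_exp_mech_exchangeable[OF assms that] by simp
  have "(\<Sum>k\<in>{1..n}. \<Sum>c\<in>PiE {1..n} (\<lambda>_. obs_range).
            weight {1..n} c * (\<phi> (fst (c k)) * exp_mech \<epsilon> {1..n} (\<lambda>j. fst (c j)) k))
      = (\<Sum>k\<in>{1..n}. \<Sum>\<rho>\<in>Rs. fR F r \<rho> * \<phi> \<rho> * sel_given_score i \<epsilon> \<rho>)"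
    by (rule sum.cong[OF refl each[symmetric]])
  moreover have "(\<Sum>c\<in>PiE {1..n} (\<lambda>_. obs_range). weight {1..n} c *
            (\<Sum>k\<in>{1..n}. \<phi> (fst (c k)) * exp_mech \<epsilon> {1..n} (\<lambda>j. fst (c j)) k))
      = (\<Sum>k\<in>{1..n}. \<Sum>c\<in>PiE {1..n} (\<lambda>_. obs_range).
            weight {1..n} c * (\<phi> (fst (c k)) * exp_mech \<epsilon> {1..n} (\<lambda>j. fst (c j)) k))"
    unfolding sum_distrib_left by (rule sum.swap)
  ultimately have "(\<Sum>c\<in>PiE {1..n} (\<lambda>_. obs_range). weight {1..n} c *
            (\<Sum>k\<in>{1..n}. \<phi> (fst (c k)) * exp_mech \<epsilon> {1..n} (\<lambda>j. fst (c j)) k))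
      = n * (\<Sum>\<rho>\<in>Rs. fR F r \<rho> * \<phi> \<rho> * sel_given_score i \<epsilon> \<rho>)"
    by (simp only: sum_constant card_atLeastAtMost) simp
  then show ?thesis
    using assms by simp
qed

lemma gamma_pos:
  assumes n: "2 \<le> n" and i: "i \<in> {1..n}" and "0 < \<epsilon>"
    and sum_gap: "(\<Sum>\<rho>\<in>Rs. fA_gap \<rho>) = 0"
    and lo: "\<rho>0 \<in> Rs" "\<And>\<rho>. \<rho> \<in> Rs \<Longrightarrow> \<rho>0 \<le> \<rho>"
      "\<And>\<rho>. \<rho> \<in> Rs - {\<rho>0} \<Longrightarrow> 0 \<le> fA_gap \<rho>" "fA_gap \<rho>0 < 0"
    and hi: "\<rho>1 \<in> Rs" "0 < fA_gap \<rho>1"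
  shows "0 < gamma F r n i \<epsilon>"
  unfolding gamma_eq_sum_sel_given_score[OF i]
proof (rule sum_mult_pos_of_sum_eq_0[OF finite_scores lo(1) sum_gap _ _ hi(2)])
  show "\<rho>1 \<in> Rs - {\<rho>0}"
    using hi lo(4) by auto
  fix \<rho> assume \<rho>: "\<rho> \<in> Rs - {\<rho>0}"
  then have "\<rho>0 < \<rho>"
    using lo(2)[of \<rho>] by auto
  then show "0 \<le> fA_gap \<rho> \<and> sel_given_score i \<epsilon> \<rho>0 < sel_given_score i \<epsilon> \<rho>"
    using lo(3)[OF \<rho>] sel_given_score_strict_mono[OF n i \<open>0 < \<epsilon>\<close>] by simp
qed

lemma gamma_eq_average_over_configs:
  assumes i: "i \<in> {1..n}" and gap: "\<And>\<rho>. \<rho> \<in> Rs \<Longrightarrow> fA_gap \<rho> = fR F r \<rho> * \<phi> \<rho>"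
  shows "gamma F r n i \<epsilon>
       = (\<Sum>c\<in>PiE {1..n} (\<lambda>_. obs_range). weight {1..n} c *
            (\<Sum>k\<in>{1..n}. \<phi> (fst (c k)) * exp_mech \<epsilon> {1..n} (\<lambda>j. fst (c j)) k)) / n"
proof -
  have "gamma F r n i \<epsilon> = (\<Sum>\<rho>\<in>Rs. fR F r \<rho> * \<phi> \<rho> * sel_given_score i \<epsilon> \<rho>)"
    unfolding gamma_eq_sum_sel_given_score[OF i] by (intro sum.cong refl) (simp only: gap mult.assoc)
  then show ?thesis
    unfolding sum_fR_sel_given_score_eq_average[OF i] .
qed

lemma exists_config_pos_weight:
  assumes "i \<in> {1..n}" "\<rho>0 \<in> Rs" "\<rho>1 \<in> Rs" "0 < fR F r \<rho>0" "0 < fR F r \<rho>1"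
  obtains c where "c \<in> PiE {1..n} (\<lambda>_. obs_range)" "0 < weight {1..n} c"
    "fst (c i) = \<rho>1" "\<And>k. k \<in> {1..n} - {i} \<Longrightarrow> fst (c k) = \<rho>0"
proof -
  obtain u0 where u0: "u0 \<in> {0, 1} \<times> {0, 1}" "0 < law (\<rho>0, u0)"
    using assms(4)[unfolded fR_eq_sum_law] by (rule sum_pos_imp_ex_pos)
  obtain u1 where u1: "u1 \<in> {0, 1} \<times> {0, 1}" "0 < law (\<rho>1, u1)"
    using assms(5)[unfolded fR_eq_sum_law] by (rule sum_pos_imp_ex_pos)
  define c where "c = (\<lambda>k\<in>{1..n}. if k = i then (\<rho>1, u1) else (\<rho>0, u0))"
  show ?thesis
  proof (rule that[of c])
    show "c \<in> PiE {1..n} (\<lambda>_. obs_range)" "0 < weight {1..n} c"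
      using assms u0 u1 by (auto simp: c_def obs_range_def weight_def intro!: prod_pos)
  qed (use assms in \<open>auto simp: c_def\<close>)
qed

lemma gamma_converges_from_below_of_ratio_mono:
  assumes n: "2 \<le> n" and i: "i \<in> {1..n}"
    and \<phi>: "mono_on Rs \<phi>" "\<And>\<rho>. \<rho> \<in> Rs \<Longrightarrow> fA_gap \<rho> = fR F r \<rho> * \<phi> \<rho>"
    and lo_hi: "\<rho>0 \<in> Rs" "\<rho>1 \<in> Rs" "\<rho>0 < \<rho>1" "\<phi> \<rho>0 < \<phi> \<rho>1"
    and pos: "0 < fR F r \<rho>0" "0 < fR F r \<rho>1"
  shows "\<exists>g. (gamma F r n i \<longlongrightarrow> g) at_top \<and> (\<forall>\<epsilon>. gamma F r n i \<epsilon> < g)"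
proof -
  define C where "C = PiE {1..n} (\<lambda>_. obs_range)"
  define x where "x c = (\<lambda>j. fst (c j))" for c :: "nat \<Rightarrow> real \<times> nat \<times> nat"
  define soft where "soft \<epsilon> c = (\<Sum>k\<in>{1..n}. \<phi> (x c k) * exp_mech \<epsilon> {1..n} (x c) k)" for \<epsilon> c
  define hard where "hard c = \<phi> (Max (x c ` {1..n}))" for c
  have I: "finite {1..n}" "{1..n} \<noteq> {}"
    using i by auto
  have gamma_eq: "gamma F r n i \<epsilon> = (\<Sum>c\<in>C. weight {1..n} c * soft \<epsilon> c) / n" for \<epsilon>
    using gamma_eq_average_over_configs[OF i \<phi>(2), of \<epsilon>] by (simp add: C_def soft_def x_def)
  have hard_ge: "\<phi> (x c k) \<le> hard c" if "c \<in> C" "k \<in> {1..n}" for c k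
  proof -
    have x_range: "x c ` {1..n} \<subseteq> Rs"
      using that(1) by (auto simp: C_def x_def obs_range_def PiE_iff)
    have "Max (x c ` {1..n}) \<in> x c ` {1..n}"
      using I by (intro Max_in) auto
    then have max_in: "Max (x c ` {1..n}) \<in> Rs"
      using x_range by auto
    have le_max: "x c k \<le> Max (x c ` {1..n})"
      using I that(2) by simp
    have "x c k \<in> Rs"
      using x_range that(2) by auto
    then show ?thesis
      unfolding hard_def by (rule mono_onD[OF \<phi>(1) _ max_in le_max])
  qed
  have soft_le: "soft \<epsilon> c \<le> hard c" if "c \<in> C" for \<epsilon> c
    unfolding soft_def by (rule sum_exp_mech_weighted_le[where g="\<lambda>k. \<phi> (x c k)", OF I hard_ge[OF that]])
  obtain c1 where c1: "c1 \<in> C" "0 < weight {1..n} c1"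
    "x c1 i = \<rho>1" "\<And>k. k \<in> {1..n} - {i} \<Longrightarrow> x c1 k = \<rho>0"
    using exists_config_pos_weight[OF i lo_hi(1,2) pos] unfolding C_def x_def by blast
  define j :: nat where "j = (if i = 1 then 2 else 1)"
  have j: "j \<in> {1..n}" "j \<noteq> i"
    using n i by (auto simp: j_def)
  have below: "x c1 k \<le> \<rho>1" if "k \<in> {1..n}" for k
    using c1(3) c1(4)[of k] lo_hi(3) that by (cases "k = i") auto
  have "Max (x c1 ` {1..n}) = \<rho>1"
  proof (rule Max_eqI)
    show "y \<le> \<rho>1" if "y \<in> x c1 ` {1..n}" for y
      using that below by auto
    show "\<rho>1 \<in> x c1 ` {1..n}"
      using i c1(3) by (metis image_eqI)
  qed simp
  then have strict_at_j: "\<phi> (x c1 j) < hard c1"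
    using j c1(4) lo_hi(4) by (simp add: hard_def)
  have soft_less: "soft \<epsilon> c1 < hard c1" for \<epsilon>
    unfolding soft_def
    by (rule sum_exp_mech_weighted_less[where g="\<lambda>k. \<phi> (x c1 k)", OF I(1) hard_ge[OF c1(1)] j(1) strict_at_j])
  define g where "g = (\<Sum>c\<in>C. weight {1..n} c * hard c) / n"
  have "(gamma F r n i \<longlongrightarrow> g) at_top"
    unfolding gamma_eq g_def soft_def hard_def
    using I by (intro tendsto_divide tendsto_sum tendsto_mult tendsto_const sum_exp_mech_weighted_tendsto) simp_all
  moreover have "gamma F r n i \<epsilon> < g" for \<epsilon>
  proof -
    have "(\<Sum>c\<in>C. weight {1..n} c * soft \<epsilon> c) < (\<Sum>c\<in>C. weight {1..n} c * hard c)"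
      using c1 soft_le soft_less
      by (intro sum_strict_mono_ex1 bexI[of _ c1] ballI mult_left_mono mult_strict_left_mono weight_nonneg)
        (auto simp: C_def finite_PiE finite_obs_range)
    then show ?thesis
      unfolding gamma_eq g_def using n by (simp add: divide_strict_right_mono)
  qed
  ultimately show ?thesis
    by blast
qed

lemma gamma_converges_from_below:
  assumes n: "2 \<le> n" and i: "i \<in> {1..n}"
    and gap: "mono_on Rs fA_gap"
    and fR: "antimono_on Rs (fR F r)" "\<And>\<rho>. \<rho> \<in> Rs \<Longrightarrow> 0 < fR F r \<rho>"
    and lo: "\<rho>0 \<in> Rs" "\<And>\<rho>. \<rho> \<in> Rs \<Longrightarrow> \<rho>0 \<le> \<rho>"
      "\<And>\<rho>. \<rho> \<in> Rs - {\<rho>0} \<Longrightarrow> 0 \<le> fA_gap \<rho>" "fA_gap \<rho>0 < 0"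
    and hi: "\<rho>1 \<in> Rs" "0 < fA_gap \<rho>1"
  shows "\<exists>g. (gamma F r n i \<longlongrightarrow> g) at_top \<and> (\<forall>\<epsilon>. gamma F r n i \<epsilon> < g)"
proof -
  define \<phi> where "\<phi> \<rho> = fA_gap \<rho> / fR F r \<rho>" for \<rho>
  have \<phi>_mono: "mono_on Rs \<phi>"
    unfolding \<phi>_def using gap fR lo(2,3) by (rule mono_on_divide_antimono)
  have gap_eq: "fA_gap \<rho> = fR F r \<rho> * \<phi> \<rho>" if "\<rho> \<in> Rs" for \<rho>
    using fR(2)[OF that] by (simp add: \<phi>_def)
  have "\<phi> \<rho>0 < 0" "0 < \<phi> \<rho>1"
    using lo(1,4) hi fR(2) by (simp_all add: \<phi>_def divide_neg_pos)
  then have \<phi>01: "\<phi> \<rho>0 < \<phi> \<rho>1"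
    by linarith
  have "\<rho>0 < \<rho>1"
    using lo(2)[OF hi(1)] lo(4) hi(2) by (auto simp: le_less)
  then show ?thesis
    using gamma_converges_from_below_of_ratio_mono[OF n i \<phi>_mono gap_eq lo(1) hi(1) _ \<phi>01
        fR(2)[OF lo(1)] fR(2)[OF hi(1)]]
    by blast
qed

end

theorem theorem2:
  fixes F :: "('x \<times> nat \<times> nat) measure" and r :: "'x \<Rightarrow> real"
    and Rs :: "real set" and n :: nat
  assumes n: "n \<ge> 2"
    and F_prob: "prob_space F"
    and meas: "(\<lambda>w. (r (fst w), fst (snd w), snd (snd w))) \<in> measurable F (count_space UNIV)"
    and AY01: "\<forall>w \<in> space F. fst (snd w) \<in> {0, 1} \<and> snd (snd w) \<in> {0, 1}"
    and Rs_fin: "finite Rs" and Rs_sub: "Rs \<subseteq> {0..1}" and Rs0: "0 \<in> Rs" and Rs1: "1 \<in> Rs"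
    and r_range: "\<forall>w \<in> space F. r (fst w) \<in> Rs"
    and pos: "\<And>a. a \<in> {0, 1} \<Longrightarrow>
                 measure F {w \<in> space F. fst (snd w) = a \<and> snd (snd w) = 1} > 0"
    and mono_diff: "\<forall>\<rho>\<in>Rs. \<forall>\<rho>'\<in>Rs. \<rho> > \<rho>' \<longrightarrow>
                 fA F r 0 \<rho> - fA F r 1 \<rho> > fA F r 0 \<rho>' - fA F r 1 \<rho>'"
    and mono_fR: "\<forall>\<rho>\<in>Rs. \<forall>\<rho>'\<in>Rs. \<rho> > \<rho>' \<longrightarrow> fR F r \<rho> < fR F r \<rho>'"
    and nonneg: "\<forall>\<rho>\<in>Rs - {0}. fA F r 0 \<rho> - fA F r 1 \<rho> \<ge> 0"
  shows "\<forall>i\<in>{1..n}.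
           (\<forall>\<epsilon>>0. gamma F r n i \<epsilon> > 0) \<and>
           (\<exists>g_inf. (gamma F r n i \<longlongrightarrow> g_inf) at_top \<and> (\<forall>\<epsilon>\<ge>0. gamma F r n i \<epsilon> < g_inf))"
proof -
  interpret scored_population F r Rs n
    using F_prob meas AY01 Rs_fin r_range
    by (simp add: scored_population_def scored_population_axioms_def)
  have Rs_nonneg: "\<And>\<rho>. \<rho> \<in> Rs \<Longrightarrow> 0 \<le> \<rho>"
    and Rs_le1: "\<And>\<rho>. \<rho> \<in> Rs \<Longrightarrow> \<rho> \<le> 1"
    using Rs_sub by auto
  have gap_mono: "strict_mono_on Rs fA_gap"
    using mono_diff by (auto intro!: strict_mono_onI simp: fA_gap_def)
  have gap_nonneg: "\<And>\<rho>. \<rho> \<in> Rs - {0} \<Longrightarrow> 0 \<le> fA_gap \<rho>"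
    using nonneg by (simp add: fA_gap_def)
  have sum_gap: "(\<Sum>\<rho>\<in>Rs. fA_gap \<rho>) = 0"
    using pos by (simp add: sum_fA_gap)
  have gap0: "fA_gap 0 < 0" and gap1: "0 < fA_gap 1"
    using strict_mono_on_sum_eq_0_signs[OF Rs_fin Rs0 Rs1 zero_less_one Rs_nonneg Rs_le1 gap_mono sum_gap]
    by auto
  have fR1: "0 < fR F r 1"
    using fR_pos_of_fA_pos[of 0 1] gap1 fA_nonneg[of F r 1 1] by (simp add: fA_gap_def)
  have fR_pos: "0 < fR F r \<rho>" if "\<rho> \<in> Rs" for \<rho>
    using fR1 mono_fR[rule_format, OF Rs1 that] Rs_le1[OF that] by (cases "\<rho> = 1") auto
  have fR_anti: "antimono_on Rs (fR F r)"
    using mono_fR by (intro monotone_onI) (auto simp: order_le_less)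
  show ?thesis
  proof
    fix i assume i: "i \<in> {1..n}"
    have "0 < gamma F r n i \<epsilon>" if "0 < \<epsilon>" for \<epsilon>
      by (rule gamma_pos[OF n i that sum_gap Rs0 Rs_nonneg gap_nonneg gap0 Rs1 gap1])
    moreover obtain g where "(gamma F r n i \<longlongrightarrow> g) at_top" "\<forall>\<epsilon>. gamma F r n i \<epsilon> < g"
      using gamma_converges_from_below[OF n i strict_mono_on_imp_mono_on[OF gap_mono] fR_anti fR_pos
          Rs0 Rs_nonneg gap_nonneg gap0 Rs1 gap1]
      by blast
    ultimately show "(\<forall>\<epsilon>>0. gamma F r n i \<epsilon> > 0) \<and>
        (\<exists>g_inf. (gamma F r n i \<longlongrightarrow> g_inf) at_top \<and> (\<forall>\<epsilon>\<ge>0. gamma F r n i \<epsilon> < g_inf))"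
      by blast
  qed
qed

end
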